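(* Let $H$ and $J$ be complex Hilbert spaces with $H$ infinite dimensional, and let $T \in \mathcal{L}(H,J)$ be a compact operator. Then $T$ satisfies the property $\mathcal{N}^*$ if and only if $T$ is non-injective.
   Context: $\mathcal{L}(H,J)$ denotes the space of bounded linear operators from $H$ to $J$. For $T \in \mathcal{L}(H,J)$ put $[T] := \inf_{\|x\|_H = 1} \|Tx\|_J$. An operator $T \in \mathcal{L}(H,J)$ satisfies the property $\mathcal{N}^*$ if there exists $x_0 \in H$ with $\|x_0\|_H = 1$ such that $[T] = \|T x_0\|_J$. *)

theory Defs
  imports "HOL-Analysis.Analysis"
begin

text \<open>A complex Hilbert space is modelled as a real Hilbert space (type class
  real_inner + complete_space, inner product = real part of the complex one)
  together with an orthogonal complex structure iu (multiplication by the
  imaginary unit): real-linear, iu (iu x) = -x and norm-preserving.\<close>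

definition complex_structure :: "('a::real_normed_vector \<Rightarrow> 'a) \<Rightarrow> bool" where
  "complex_structure iu \<longleftrightarrow> linear iu \<and> (\<forall>x. iu (iu x) = - x) \<and> (\<forall>x. norm (iu x) = norm x)"

definition complex_linear_wrt ::
  "('a::real_normed_vector \<Rightarrow> 'a) \<Rightarrow> ('b::real_normed_vector \<Rightarrow> 'b) \<Rightarrow> ('a \<Rightarrow> 'b) \<Rightarrow> bool" where
  "complex_linear_wrt iH iJ T \<longleftrightarrow> linear T \<and> (\<forall>x. T (iH x) = iJ (T x))"

definition infinite_dimensional_space :: "'a::real_vector itself \<Rightarrow> bool" where
  "infinite_dimensional_space _ \<longleftrightarrow> (\<forall>B::'a set. finite B \<longrightarrow> span B \<noteq> UNIV)"

definition compact_operator :: "('a::real_normed_vector \<Rightarrow> 'b::real_normed_vector) \<Rightarrow> bool" where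
  "compact_operator T \<longleftrightarrow> bounded_linear T \<and> (\<forall>S. bounded S \<longrightarrow> compact (closure (T ` S)))"

definition min_modulus :: "('a::real_normed_vector \<Rightarrow> 'b::real_normed_vector) \<Rightarrow> real" where
  "min_modulus T = Inf ((\<lambda>x. norm (T x)) ` {x. norm x = 1})"

definition property_Nstar :: "('a::real_normed_vector \<Rightarrow> 'b::real_normed_vector) \<Rightarrow> bool" where
  "property_Nstar T \<longleftrightarrow> (\<exists>x0. norm x0 = 1 \<and> min_modulus T = norm (T x0))"

end

theory Submission
  imports Defs
begin

text \<open>An infinite dimensional space carries an orthonormal sequence \<open>e\<close>, whose points are
  pairwise at distance \<open>sqrt 2\<close>. A compact operator maps \<open>e\<close> into a compact set, so some
  subsequence of \<open>T \<circ> e\<close> is Cauchy; hence \<open>T\<close> cannot satisfy \<open>c * norm x \<le> norm (T x)\<close>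
  with \<open>c > 0\<close>, i.e. \<open>[T] = 0\<close>. Then \<open>[T]\<close> is attained at a unit vector exactly when \<open>T\<close>
  has a nontrivial kernel.\<close>

lemma Gram_Schmidt_step_finite:
  fixes C :: "'a::real_inner set"
  assumes "finite C" and "pairwise orthogonal C" and "x \<in> span C"
  shows "orthogonal (a - (\<Sum>b\<in>C. (b \<bullet> a / (b \<bullet> b)) *\<^sub>R b)) x"
proof -
  have "orthogonal (a - (\<Sum>b\<in>C. (b \<bullet> a / (b \<bullet> b)) *\<^sub>R b)) y" if "y \<in> C" for y
  proof -
    have "a \<bullet> y = (\<Sum>b\<in>C. if b = y then b \<bullet> a else 0)"
      using assms(1) that by (simp add: inner_commute)
    also have "\<dots> = (\<Sum>b\<in>C. b \<bullet> a * (b \<bullet> y) / (b \<bullet> b))"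
      using assms(2) that by (intro sum.cong) (auto simp: pairwise_def orthogonal_def)
    finally show ?thesis
      by (simp add: orthogonal_def algebra_simps inner_sum_left)
  qed
  then show ?thesis
    using orthogonal_to_span orthogonal_commute assms(3) by blast
qed

lemma infinite_dimensional_unit_orthogonal:
  fixes F :: "'a::real_inner set"
  assumes "infinite_dimensional_space TYPE('a)" and "finite F"
  shows "\<exists>u. norm u = 1 \<and> (\<forall>x\<in>F. orthogonal u x)"
proof -
  obtain a where a: "a \<notin> span F"
    using assms unfolding infinite_dimensional_space_def by blast
  obtain C where C: "finite C" "span C = span F" "pairwise orthogonal C"
    using basis_orthogonal[OF assms(2)] by blast
  define p where "p = (\<Sum>b\<in>C. (b \<bullet> a / (b \<bullet> b)) *\<^sub>R b)"
  have "p \<in> span F"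
    unfolding p_def C(2)[symmetric] by (intro span_sum span_scale span_base)
  with a have "a - p \<noteq> 0" by auto
  moreover have "orthogonal (a - p) x" if "x \<in> F" for x
    unfolding p_def using Gram_Schmidt_step_finite[OF C(1,3)] C(2) that span_base by blast
  ultimately show ?thesis
    by (intro exI[of _ "(a - p) /\<^sub>R norm (a - p)"]) (simp add: orthogonal_clauses)
qed

lemma infinite_dimensional_orthonormal_sequence:
  assumes "infinite_dimensional_space TYPE('a)"
  obtains e :: "nat \<Rightarrow> 'a::real_inner"
  where "\<And>n. norm (e n) = 1" and "\<And>m n. m \<noteq> n \<Longrightarrow> orthogonal (e m) (e n)"
proof -
  define pick :: "'a set \<Rightarrow> 'a" where "pick F = (SOME u. norm u = 1 \<and> (\<forall>x\<in>F. orthogonal u x))" for F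
  define S where "S n = rec_nat {} (\<lambda>_ F. insert (pick F) F) n" for n
  have S_Suc: "S (Suc n) = insert (pick (S n)) (S n)" for n
    by (simp add: S_def)
  have "finite (S n)" for n
    by (induction n) (simp_all add: S_def)
  then have pick_S: "norm (pick (S n)) = 1 \<and> (\<forall>x\<in>S n. orthogonal (pick (S n)) x)" for n
    unfolding pick_def by (rule someI_ex[OF infinite_dimensional_unit_orthogonal[OF assms]])
  have earlier_in_S: "pick (S m) \<in> S n" if "m < n" for m n
    using that by (induction n) (auto simp: S_Suc less_Suc_eq)
  have "orthogonal (pick (S m)) (pick (S n))" if "m \<noteq> n" for m n
  proof (cases "m < n")
    case True
    then show ?thesis using pick_S earlier_in_S orthogonal_commute by blast
  next
    case False
    with that have "n < m" by simp
    then show ?thesis using pick_S earlier_in_S by blast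
  qed
  with pick_S show thesis by (intro that[of "\<lambda>n. pick (S n)"]) auto
qed

lemma norm_diff_orthonormal:
  fixes u v :: "'a::real_inner"
  assumes "norm u = 1" and "norm v = 1" and "orthogonal u v"
  shows "norm (u - v) = sqrt 2"
proof -
  have "(norm (u - v))\<^sup>2 = 2"
    using assms dot_norm_neg[of u v] by (simp add: orthogonal_def)
  then show ?thesis
    by (metis norm_ge_zero real_sqrt_unique)
qed

lemma compact_operator_not_bounded_below:
  fixes T :: "'a::real_inner \<Rightarrow> 'b::real_normed_vector"
  assumes "infinite_dimensional_space TYPE('a)" and "compact_operator T" and "c > 0"
  shows "\<not> (\<forall>x. c * norm x \<le> norm (T x))"
proof
  assume below: "\<forall>x. c * norm x \<le> norm (T x)"
  interpret bounded_linear T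
    using assms(2) by (simp add: compact_operator_def)
  obtain e :: "nat \<Rightarrow> 'a" where e_unit: "\<And>n. norm (e n) = 1"
    and e_orth: "\<And>m n. m \<noteq> n \<Longrightarrow> orthogonal (e m) (e n)"
    using infinite_dimensional_orthonormal_sequence[OF assms(1)] by blast
  have separated: "c \<le> norm (T (e m) - T (e n))" if "m \<noteq> n" for m n
  proof -
    have "c \<le> c * norm (e m - e n)"
      using norm_diff_orthonormal[OF e_unit e_unit e_orth[OF that]] assms(3) by simp
    also have "\<dots> \<le> norm (T (e m) - T (e n))"
      using below by (simp add: diff[symmetric])
    finally show ?thesis .
  qed
  have "seq_compact (closure (T ` cball 0 1))"
    using assms(2) by (simp add: compact_operator_def compact_imp_seq_compact)
  moreover have "\<forall>n. (T \<circ> e) n \<in> closure (T ` cball 0 1)"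
    using e_unit by (simp add: closure_subset[THEN subsetD])
  ultimately obtain l r where r: "strict_mono r" "(T \<circ> e \<circ> r) \<longlonglongrightarrow> l"
    by (rule seq_compactE)
  from r(2) have "Cauchy (T \<circ> e \<circ> r)"
    by (rule LIMSEQ_imp_Cauchy)
  then obtain M where "\<forall>m\<ge>M. \<forall>n\<ge>M. norm ((T \<circ> e \<circ> r) m - (T \<circ> e \<circ> r) n) < c"
    using CauchyD assms(3) by blast
  then have "norm (T (e (r (Suc M))) - T (e (r M))) < c"
    by auto
  moreover have "r (Suc M) \<noteq> r M"
    using r(1) by (simp add: strict_mono_eq)
  ultimately show False
    using separated by (meson not_less)
qed

lemma min_modulus_le:
  fixes T :: "'a::real_normed_vector \<Rightarrow> 'b::real_normed_vector"
  assumes "norm x = 1"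
  shows "min_modulus T \<le> norm (T x)"
  unfolding min_modulus_def using assms by (intro cInf_lower bdd_belowI[of _ 0]) auto

lemma min_modulus_nonneg:
  fixes T :: "'a::real_normed_vector \<Rightarrow> 'b::real_normed_vector"
  assumes "norm (x :: 'a) = 1"
  shows "0 \<le> min_modulus T"
  unfolding min_modulus_def using assms by (intro cInf_greatest) auto

lemma min_modulus_bounded_below:
  fixes T :: "'a::real_normed_vector \<Rightarrow> 'b::real_normed_vector"
  assumes "linear T"
  shows "min_modulus T * norm x \<le> norm (T x)"
proof (cases "x = 0")
  case False
  have "min_modulus T \<le> norm (T (x /\<^sub>R norm x))"
    using False by (intro min_modulus_le) simp
  also have "\<dots> = norm (T x) / norm x"
    using assms by (simp add: linear_scale divide_inverse_commute)
  finally show ?thesis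
    using False by (simp add: field_simps)
qed (use assms linear_0 in simp)

lemma compact_operator_min_modulus_eq_0:
  fixes T :: "'a::real_inner \<Rightarrow> 'b::real_normed_vector"
  assumes "infinite_dimensional_space TYPE('a)" and "compact_operator T"
  shows "min_modulus T = 0"
proof (rule ccontr)
  assume "min_modulus T \<noteq> 0"
  moreover obtain u :: 'a where "norm u = 1"
    using infinite_dimensional_unit_orthogonal[OF assms(1), of "{}"] by auto
  ultimately have "min_modulus T > 0"
    using min_modulus_nonneg[of u T] by simp
  moreover have "linear T"
    using assms(2) by (simp add: compact_operator_def bounded_linear.linear)
  ultimately show False
    using compact_operator_not_bounded_below[OF assms] min_modulus_bounded_below by blast
qed

lemma property_Nstar_iff_not_inj_if_min_modulus_eq_0:
  fixes T :: "'a::real_normed_vector \<Rightarrow> 'b::real_normed_vector"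
  assumes "linear T" and "min_modulus T = 0"
  shows "property_Nstar T \<longleftrightarrow> \<not> inj T"
proof -
  have "property_Nstar T \<longleftrightarrow> (\<exists>x. norm x = 1 \<and> T x = 0)"
    unfolding property_Nstar_def assms(2) by auto
  also have "\<dots> \<longleftrightarrow> (\<exists>x. x \<noteq> 0 \<and> T x = 0)"
  proof
    assume "\<exists>x. x \<noteq> 0 \<and> T x = 0"
    then obtain x where "x \<noteq> 0" "T x = 0"
      by blast
    then have "norm (x /\<^sub>R norm x) = 1 \<and> T (x /\<^sub>R norm x) = 0"
      using assms(1) by (simp add: linear_scale)
    then show "\<exists>x. norm x = 1 \<and> T x = 0" ..
  qed (metis norm_zero zero_neq_one)
  also have "\<dots> \<longleftrightarrow> \<not> inj T"
    using assms(1) linear_inj_iff_eq_0 by blast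
  finally show ?thesis .
qed

theorem proposition1p2:
  fixes T :: "'a::{real_inner, complete_space} \<Rightarrow> 'b::{real_inner, complete_space}"
    and iH :: "'a \<Rightarrow> 'a" and iJ :: "'b \<Rightarrow> 'b"
  assumes "complex_structure iH" and "complex_structure iJ"
    and "infinite_dimensional_space TYPE('a)"
    and "bounded_linear T" and "complex_linear_wrt iH iJ T"
    and "compact_operator T"
  shows "property_Nstar T \<longleftrightarrow> \<not> inj T"
  using property_Nstar_iff_not_inj_if_min_modulus_eq_0 bounded_linear.linear[OF assms(4)]
    compact_operator_min_modulus_eq_0[OF assms(3,6)] by blast

end
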